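(* Let $a\ge2$ and $0\le\mu\le a-1$ be integers. Let $F(n,t)=\dfrac{n!^a}{\Gamma^{a-1}(t+1)\Gamma^a(n-t+1)}$, $F_{n,\mu}=\sum_{k=0}^n\bigl(\frac d{dt}\bigr)^\mu F(n,t)\big|_{t=k}$, and for $u\in\mathbb R$, $j\ge0$, $$\widetilde I_{n,j}(u)=\sum_{k=0}^n\operatorname{res}_{t=k}\Bigl(F(n,t)\Bigl(\frac{\pi}{\sin\pi t}\Bigr)^{j+1}e^{i\pi tu}\Bigr).$$ Then there are real constants $c_{j,\mu}$, $0\le j\le\mu$, independent of $n$, with $c_{\mu,\mu}\ne0$, such that for all $n\ge0$: $F_{n,\mu}=\widetilde I_{n,0}(1)$ if $\mu=0$; $F_{n,\mu}=\sum_{j=0}^{[\mu/2]}c_{2j+1,\mu}\widetilde I_{n,2j+1}(0)$ if $\mu$ is odd; $F_{n,\mu}=\sum_{j=1}^{\mu/2}c_{2j,\mu}\operatorname{Re}\widetilde I_{n,2j}(1)$ if $\mu\ge2$ is even. *)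

theory Defs
  imports "HOL-Complex_Analysis.Complex_Analysis"
begin

text \<open>F(n,t) = n!^a / (Gamma(t+1)^(a-1) Gamma(n-t+1)^a), written with the entire
  reciprocal Gamma function rGamma = 1/Gamma; generic over real and complex t.\<close>
definition FF :: "nat \<Rightarrow> nat \<Rightarrow> 'a::Gamma \<Rightarrow> 'a" where
  "FF a n t = (of_nat (fact n))^a * (rGamma (t + 1))^(a - 1) * (rGamma (of_nat n - t + 1))^a"

definition Fnmu :: "nat \<Rightarrow> nat \<Rightarrow> nat \<Rightarrow> real" where
  "Fnmu a n \<mu> = (\<Sum>k=0..n. (deriv ^^ \<mu>) (\<lambda>t::real. FF a n t) (real k))"

definition Itilde :: "nat \<Rightarrow> nat \<Rightarrow> nat \<Rightarrow> real \<Rightarrow> complex" where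
  "Itilde a n j u = (\<Sum>k=0..n. residue
     (\<lambda>t::complex. FF a n t * (complex_of_real pi / sin (complex_of_real pi * t))^(j+1)
        * exp (\<i> * complex_of_real pi * t * complex_of_real u)) (of_nat k))"

end

theory Submission
  imports Defs
begin

text \<open>Let P(s) = \<pi>s / sin(\<pi>s), holomorphic on the unit disc, even, and real on the real
  axis. Near an integer k, \<pi> / sin(\<pi>t) = (-1)^k P(t-k) / (t-k), and for u = 0, j odd as well as
  for u = 1, j even the factor exp(i\<pi>tu) changes by the same sign (-1)^(k(j+1)) under t \<mapsto> t + k.
  So every residue is a Leibniz sum, and summing over k gives
  tilde I(n,j,u) = \<Sum>(i \<le> j) F(n,i) c(j-i) / (i! (j-i)!), where c(m) is the m-th derivative at 0 of
  P(s)^(j+1) exp(i\<pi>su). Since P is even and real, only odd i survive for u = 0, and taking real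
  parts removes the odd i for u = 1; there the identity P^2 cos(\<pi>s) = P - s P' makes c(j) vanish,
  which removes i = 0. What remains is a triangular system in the F(n,i) with diagonal entries
  1/i!, and inverting it gives the theorem.\<close>

section \<open>Higher derivatives of symmetric holomorphic functions\<close>

lemma higher_deriv_even_fun_odd_order:
  assumes hol: "H holomorphic_on ball 0 r" and even: "\<And>s. s \<in> ball 0 r \<Longrightarrow> H (-s) = H s"
    and "0 < r" "odd m"
  shows "(deriv ^^ m) H 0 = 0"
proof -
  have "uminus holomorphic_on ball (0::complex) r"
    using holomorphic_on_minus[OF holomorphic_on_ident] by simp
  then have "(\<lambda>w. H (-1 * w)) holomorphic_on ball 0 r"
    using holomorphic_on_compose_gen[of uminus "ball 0 r" H "ball 0 r"] hol
    by (simp add: o_def image_subset_iff)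
  then have "(deriv ^^ m) (\<lambda>w. H (-1 * w)) 0 = (deriv ^^ m) H 0"
    using hol even \<open>0 < r\<close> by (intro higher_deriv_transform_within_open) auto
  moreover have "(deriv ^^ m) (\<lambda>w. H (-1 * w)) 0 = (-1)^m * (deriv ^^ m) H (-1 * 0)"
    using hol \<open>0 < r\<close> by (intro higher_deriv_compose_linear[where S = "ball 0 r"]) auto
  ultimately show ?thesis
    using \<open>odd m\<close> by simp
qed

lemma higher_deriv_cnj_symmetric:
  assumes hol: "H holomorphic_on ball 0 r"
    and sym: "\<And>s. s \<in> ball 0 r \<Longrightarrow> cnj (H (cnj s)) = H s"
  shows "z \<in> ball 0 r \<Longrightarrow> (deriv ^^ m) H (cnj z) = cnj ((deriv ^^ m) H z)"
proof (induction m arbitrary: z)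
  case 0
  then show ?case
    using sym[of z] by (metis complex_cnj_cnj funpow_0)
next
  case (Suc m)
  define G where "G = (deriv ^^ m) H"
  have holG: "G holomorphic_on ball 0 r"
    unfolding G_def by (rule holomorphic_higher_deriv[OF hol]) auto
  define D where "D = deriv G (cnj z)"
  have "(G has_field_derivative D) (at (cnj z))"
    unfolding D_def by (rule holomorphic_derivI[OF holG]) (use Suc.prems in auto)
  then have "((cnj \<circ> G \<circ> cnj) has_field_derivative cnj D) (at z)"
    by (rule has_field_derivative_cnj_cnj)
  then have "(G has_field_derivative cnj D) (at z)"
  proof (rule has_field_derivative_transform_within_open)
    show "(cnj \<circ> G \<circ> cnj) w = G w" if "w \<in> ball 0 r" for w
      using Suc.IH[OF that] by (simp add: G_def)
  qed (use Suc.prems in auto)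
  then have "deriv G z = cnj D"
    by (rule DERIV_imp_deriv)
  then show ?case
    by (simp add: G_def D_def)
qed

lemma higher_deriv_cnj_symmetric_real:
  assumes "H holomorphic_on ball 0 r" "\<And>s. s \<in> ball 0 r \<Longrightarrow> cnj (H (cnj s)) = H s" "0 < r"
  shows "(deriv ^^ m) H 0 \<in> \<real>"
  using higher_deriv_cnj_symmetric[OF assms(1,2), of 0 m] \<open>0 < r\<close>
  by (simp add: Reals_cnj_iff)

lemma higher_deriv_of_real:
  fixes G :: "complex \<Rightarrow> complex" and g :: "real \<Rightarrow> real"
  assumes hol: "G holomorphic_on UNIV" and eq: "\<And>x. G (of_real x) = of_real (g x)"
  shows "(deriv ^^ p) G (of_real x) = of_real ((deriv ^^ p) g x)"
proof (induction p arbitrary: x)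
  case 0
  then show ?case using eq by simp
next
  case (Suc p)
  define D where "D = deriv ((deriv ^^ p) G) (of_real x)"
  have "((deriv ^^ p) G has_field_derivative D) (at (of_real x))"
    unfolding D_def using holomorphic_higher_deriv[OF hol]
    by (intro holomorphic_derivI[of _ UNIV]) auto
  then have "((\<lambda>y. (deriv ^^ p) G (of_real y)) has_vector_derivative D) (at x)"
    by (rule has_vector_derivative_real_field)
  then have v: "((\<lambda>y. complex_of_real ((deriv ^^ p) g y)) has_vector_derivative D) (at x)"
    using Suc.IH by simp
  have "((deriv ^^ p) g has_field_derivative Re D) (at x)"
    using has_field_derivative_Re[OF v] by simp
  moreover have "((\<lambda>y. 0::real) has_field_derivative Im D) (at x)"
    using has_field_derivative_Im[OF v] by simp
  then have "Im D = 0"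
    using DERIV_unique DERIV_const by blast
  then have "D = of_real (Re D)"
    by (simp add: complex_eqI)
  ultimately show ?case
    by (simp add: DERIV_imp_deriv D_def)
qed

lemma higher_deriv_times_ident_deriv:
  assumes hol: "T holomorphic_on S" and "open S" "0 \<in> S"
  shows "(deriv ^^ j) (\<lambda>s. s * deriv T s) 0 = of_nat j * (deriv ^^ j) T 0"
proof (cases j)
  case 0
  then show ?thesis by simp
next
  case (Suc i)
  have "(deriv ^^ j) (\<lambda>s. s * deriv T s) 0 =
      (\<Sum>k = 0..j. of_nat (j choose k) * (deriv ^^ k) (\<lambda>s. s) 0 * (deriv ^^ (j - k)) (deriv T) 0)"
    using assms by (intro higher_deriv_mult) (auto intro!: holomorphic_intros holomorphic_deriv)
  also have "\<dots> = (\<Sum>k = 0..j. if k = 1 then of_nat j * (deriv ^^ i) (deriv T) 0 else 0)"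
    using Suc by (intro sum.cong) auto
  also have "\<dots> = of_nat j * (deriv ^^ i) (deriv T) 0"
    using Suc by simp
  also have "(deriv ^^ i) (deriv T) = (deriv ^^ j) T"
    using Suc by (simp only: funpow_Suc_right o_apply)
  finally show ?thesis .
qed

lemma higher_deriv_shift:
  assumes "F holomorphic_on UNIV"
  shows "(deriv ^^ i) (\<lambda>x. F (c + x)) z = (deriv ^^ i) F (c + z)"
  using higher_deriv_compose_linear'[OF assms, of UNIV z 1 c] by (simp add: add.commute)

section \<open>The function \<pi>s / sin(\<pi>s)\<close>

definition inv_sinc :: "complex \<Rightarrow> complex" where
  "inv_sinc s = (if s = 0 then 1 else of_real pi * s / sin (of_real pi * s))"

lemma sin_pi_times_neq_0:
  fixes s :: complex
  assumes "s \<in> ball 0 1" "s \<noteq> 0"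
  shows "sin (of_real pi * s) \<noteq> 0"
proof
  assume "sin (of_real pi * s) = 0"
  then obtain n :: int where "of_real pi * s = of_real (of_int n * pi)"
    by (auto simp: sin_eq_0)
  then have "s = of_int n"
    by (simp add: field_simps)
  with assms show False
    by (auto simp: norm_of_int)
qed

lemma holomorphic_inv_sinc: "inv_sinc holomorphic_on ball 0 1"
proof -
  define f where "f z = sin (of_real pi * z)" for z :: complex
  define g where "g z = (if z = 0 then deriv f 0 else (f z - f 0) / (z - 0))" for z
  have "f holomorphic_on UNIV"
    unfolding f_def by (intro holomorphic_intros)
  then have hol: "g holomorphic_on UNIV"
    unfolding g_def[abs_def] by (rule pole_lemma) simp
  have "deriv f 0 = of_real pi"
    unfolding f_def by (rule DERIV_imp_deriv) (auto intro!: derivative_eq_intros)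
  then have eq: "g z \<noteq> 0 \<and> of_real pi / g z = inv_sinc z" if "z \<in> ball 0 1" for z
    using sin_pi_times_neq_0[OF that] by (cases "z = 0") (simp_all add: f_def g_def inv_sinc_def)
  have "(\<lambda>z. of_real pi / g z) holomorphic_on ball 0 1"
    using eq by (intro holomorphic_intros holomorphic_on_subset[OF hol]) auto
  then show ?thesis
    by (rule holomorphic_transform) (use eq in blast)
qed

lemma inv_sinc_0 [simp]: "inv_sinc 0 = 1"
  by (simp add: inv_sinc_def)

lemma inv_sinc_minus: "inv_sinc (-s) = inv_sinc s"
  by (simp add: inv_sinc_def)

lemma inv_sinc_cnj: "cnj (inv_sinc (cnj s)) = inv_sinc s"
  by (simp add: inv_sinc_def cnj_sin)

lemma deriv_inv_sinc:
  assumes "s \<in> ball 0 1"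
  shows "deriv inv_sinc s =
    (if s = 0 then 0 else of_real pi * (sin (of_real pi * s) - of_real pi * s * cos (of_real pi * s))
                          / sin (of_real pi * s)^2)"
proof (cases "s = 0")
  case True
  then show ?thesis
    using higher_deriv_even_fun_odd_order[OF holomorphic_inv_sinc, of 1] by (simp add: inv_sinc_minus)
next
  case False
  have "((\<lambda>s. of_real pi * s / sin (of_real pi * s)) has_field_derivative
      of_real pi * (sin (of_real pi * s) - of_real pi * s * cos (of_real pi * s)) / sin (of_real pi * s)^2) (at s)"
    using sin_pi_times_neq_0[OF assms False]
    by (auto intro!: derivative_eq_intros simp: power2_eq_square algebra_simps)
  then have "(inv_sinc has_field_derivative
      of_real pi * (sin (of_real pi * s) - of_real pi * s * cos (of_real pi * s)) / sin (of_real pi * s)^2) (at s)"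
    by (rule has_field_derivative_transform_within_open[of _ _ _ "ball 0 1 - {0}"])
       (use assms False in \<open>auto simp: inv_sinc_def\<close>)
  then show ?thesis
    using False by (simp add: DERIV_imp_deriv)
qed

lemma inv_sinc_sq_cos:
  assumes "s \<in> ball 0 1"
  shows "inv_sinc s^2 * cos (of_real pi * s) = inv_sinc s - s * deriv inv_sinc s"
proof (cases "s = 0")
  case False
  have "sin (of_real pi * s) \<noteq> 0"
    using sin_pi_times_neq_0[OF assms False] .
  with False show ?thesis
    by (simp add: deriv_inv_sinc[OF assms] inv_sinc_def field_simps power2_eq_square)
qed (simp add: deriv_inv_sinc[OF assms])

section \<open>Residues at the integers\<close>

lemma sin_pi_times_of_nat_add:
  "sin (of_real pi * (of_nat k + x)) = (-1)^k * sin (of_real pi * x :: complex)"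
proof -
  have "of_real pi * (of_nat k + x) = of_real pi * x + of_real (real k * pi)"
    by (simp add: algebra_simps)
  then show ?thesis
    by (simp add: sin_add sin_of_real cos_of_real)
qed

lemma exp_i_pi_times_of_nat_add:
  "exp (\<i> * of_real pi * (of_nat k + x)) = (-1)^k * exp (\<i> * of_real pi * x)"
proof -
  have "exp (\<i> * of_real pi * (of_nat k + x)) = exp (of_nat k * (\<i> * of_real pi)) * exp (\<i> * of_real pi * x)"
    by (simp add: algebra_simps flip: exp_add)
  then show ?thesis
    by (simp add: exp_of_nat_mult)
qed

lemma pi_over_sin_of_nat_add:
  assumes "x \<in> ball 0 1" "x \<noteq> 0"
  shows "of_real pi / sin (of_real pi * (of_nat k + x)) = (-1)^k * (inv_sinc x / x)"
  using sin_pi_times_neq_0[OF assms] assms(2)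
  by (cases "even k") (simp_all add: sin_pi_times_of_nat_add inv_sinc_def)

lemma residue_pi_over_sin_power_at_nat:
  fixes F E :: "complex \<Rightarrow> complex"
  assumes holF: "F holomorphic_on UNIV" and holE: "E holomorphic_on UNIV"
    and E_shift: "\<And>x. E (of_nat k + x) = (-1)^(k * (j + 1)) * E x"
  shows "residue (\<lambda>t. F t * (of_real pi / sin (of_real pi * t))^(j+1) * E t) (of_nat k) =
    (\<Sum>i=0..j. (deriv ^^ i) F (of_nat k) * (deriv ^^ (j-i)) (\<lambda>s. inv_sinc s^(j+1) * E s) 0
               / (fact i * fact (j-i)))"
proof -
  define W where "W s = inv_sinc s^(j+1) * E s" for s
  define Fk where "Fk x = F (of_nat k + x)" for x
  have holW: "W holomorphic_on ball 0 1"
    unfolding W_def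
    by (intro holomorphic_intros holomorphic_inv_sinc holomorphic_on_subset[OF holE]) auto
  have holFk: "Fk holomorphic_on ball 0 1"
    unfolding Fk_def
    by (intro holomorphic_on_compose_gen[OF _ holF, unfolded o_def] holomorphic_intros) auto
  have integrand: "F (of_nat k + x) * (of_real pi / sin (of_real pi * (of_nat k + x)))^(j+1)
        * E (of_nat k + x) = Fk x * W x / x ^ Suc j" if "x \<in> ball 0 1 - {0}" for x
  proof -
    define \<sigma> :: complex where "\<sigma> = (-1)^(k * (j + 1))"
    have "of_real pi / sin (of_real pi * (of_nat k + x)) = (-1)^k * (inv_sinc x / x)"
      using that by (intro pi_over_sin_of_nat_add) auto
    then have "(of_real pi / sin (of_real pi * (of_nat k + x)))^(j+1) = \<sigma> * (inv_sinc x / x)^(j+1)"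
      unfolding \<sigma>_def by (simp only: power_mult_distrib power_mult)
    then have "F (of_nat k + x) * (of_real pi / sin (of_real pi * (of_nat k + x)))^(j+1)
          * E (of_nat k + x) = (\<sigma> * \<sigma>) * (Fk x * (inv_sinc x / x)^(j+1) * E x)"
      by (simp add: E_shift Fk_def \<sigma>_def mult_ac)
    also have "\<dots> = Fk x * W x / x ^ Suc j"
      by (simp add: \<sigma>_def W_def power_divide)
    finally show ?thesis .
  qed
  have "residue (\<lambda>t. F t * (of_real pi / sin (of_real pi * t))^(j+1) * E t) (of_nat k) =
      residue (\<lambda>x. F (of_nat k + x) * (of_real pi / sin (of_real pi * (of_nat k + x)))^(j+1)
                   * E (of_nat k + x)) 0"
    by (rule residue_shift_0)
  also have "\<dots> = residue (\<lambda>x. Fk x * W x / x ^ Suc j) 0"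
  proof (rule residue_cong)
    have "\<forall>\<^sub>F x in at 0. x \<in> ball (0::complex) 1 - {0}"
      by (intro eventually_at_in_open) auto
    then show "\<forall>\<^sub>F x in at 0. F (of_nat k + x) * (of_real pi / sin (of_real pi * (of_nat k + x)))^(j+1)
        * E (of_nat k + x) = Fk x * W x / x ^ Suc j"
      by (rule eventually_mono) (rule integrand)
  qed simp
  also have "\<dots> = (deriv ^^ j) (\<lambda>x. Fk x * W x) 0 / fact j"
    using holFk holW by (intro residue_holomorphic_over_power'[of "ball 0 1"] holomorphic_intros) auto
  also have "(deriv ^^ j) (\<lambda>x. Fk x * W x) 0 =
      (\<Sum>i=0..j. of_nat (j choose i) * (deriv ^^ i) F (of_nat k) * (deriv ^^ (j-i)) W 0)"
    using higher_deriv_mult[OF holFk holW, of 0 j] higher_deriv_shift[OF holF, of _ "of_nat k" 0]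
    by (simp add: Fk_def[abs_def])
  also have "\<dots> / fact j =
      (\<Sum>i=0..j. (deriv ^^ i) F (of_nat k) * (deriv ^^ (j-i)) W 0 / (fact i * fact (j-i)))"
    unfolding sum_divide_distrib by (intro sum.cong refl) (simp add: binomial_fact)
  finally show ?thesis
    by (simp only: W_def[abs_def])
qed

lemma holomorphic_FF: "(FF a n :: complex \<Rightarrow> complex) holomorphic_on UNIV"
  unfolding FF_def[abs_def] by (intro holomorphic_intros)

lemma FF_of_real: "FF a n (complex_of_real x) = of_real (FF a n x)"
proof -
  have "of_nat n - complex_of_real x + 1 = of_real (real n - x + 1)"
    and "complex_of_real x + 1 = of_real (x + 1)"
    by simp_all
  then show ?thesis
    by (simp only: FF_def rGamma_complex_of_real) simp
qed

lemma higher_deriv_FF_of_nat: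
  "(deriv ^^ i) (FF a n) (of_nat k :: complex) = of_real ((deriv ^^ i) (FF a n) (real k))"
  using higher_deriv_of_real[OF holomorphic_FF FF_of_real, where p = i and x = "real k"] by simp

definition kernel_deriv :: "nat \<Rightarrow> real \<Rightarrow> nat \<Rightarrow> complex" where
  "kernel_deriv j u m = (deriv ^^ m) (\<lambda>s. inv_sinc s^(j+1) * exp (\<i> * of_real pi * s * of_real u)) 0"

lemma kernel_deriv_order_0 [simp]: "kernel_deriv j u 0 = 1"
  by (simp add: kernel_deriv_def)

lemma Itilde_eq_sum_Fnmu:
  assumes "(u = 0 \<and> odd j) \<or> (u = 1 \<and> even j)"
  shows "Itilde a n j u =
    (\<Sum>i=0..j. of_real (Fnmu a n i) * kernel_deriv j u (j-i) / (fact i * fact (j-i)))"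
proof -
  define E where "E t = exp (\<i> * of_real pi * t * of_real u)" for t
  have E_shift: "E (of_nat k + x) = (-1)^(k * (j + 1)) * E x" for k x
  proof -
    have sign: "(-1::complex)^(k * (j + 1)) = ((-1)^(j + 1))^k"
      by (metis power_mult mult.commute)
    from assms show ?thesis
    proof
      assume "u = 0 \<and> odd j"
      then show ?thesis
        unfolding sign by (simp add: E_def)
    next
      assume "u = 1 \<and> even j"
      then show ?thesis
        unfolding sign using exp_i_pi_times_of_nat_add[of k x] by (simp add: E_def)
    qed
  qed
  have holE: "E holomorphic_on UNIV"
    unfolding E_def[abs_def] by (intro holomorphic_intros)
  have "residue (\<lambda>t. FF a n t * (of_real pi / sin (of_real pi * t))^(j+1) * E t) (of_nat k)
      = (\<Sum>i=0..j. of_real ((deriv ^^ i) (FF a n) (real k)) * kernel_deriv j u (j-i)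
                   / (fact i * fact (j-i)))" for k
    using residue_pi_over_sin_power_at_nat[where F = "FF a n", OF holomorphic_FF holE E_shift]
    by (simp add: E_def[abs_def] higher_deriv_FF_of_nat kernel_deriv_def)
  then have "Itilde a n j u = (\<Sum>k=0..n. \<Sum>i=0..j. of_real ((deriv ^^ i) (FF a n) (real k))
                 * kernel_deriv j u (j-i) / (fact i * fact (j-i)))"
    by (simp add: Itilde_def E_def)
  also have "\<dots> = (\<Sum>i=0..j. of_real (Fnmu a n i) * kernel_deriv j u (j-i) / (fact i * fact (j-i)))"
    by (subst sum.swap) (simp add: Fnmu_def sum_distrib_right sum_divide_distrib)
  finally show ?thesis .
qed

section \<open>Taylor coefficients of the kernels\<close>

lemma kernel_deriv_0_real: "kernel_deriv j 0 m \<in> \<real>"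
  unfolding kernel_deriv_def
  by (auto intro!: higher_deriv_cnj_symmetric_real holomorphic_intros holomorphic_inv_sinc
           simp: inv_sinc_cnj)

lemma kernel_deriv_0_odd: "odd m \<Longrightarrow> kernel_deriv j 0 m = 0"
  unfolding kernel_deriv_def
  by (auto intro!: higher_deriv_even_fun_odd_order holomorphic_intros holomorphic_inv_sinc
           simp: inv_sinc_minus)

definition cos_kernel :: "nat \<Rightarrow> complex \<Rightarrow> complex" where
  "cos_kernel j s = inv_sinc s^(j+1) * cos (of_real pi * s)"

lemma holomorphic_cos_kernel: "cos_kernel j holomorphic_on ball 0 1"
  unfolding cos_kernel_def[abs_def] by (intro holomorphic_intros holomorphic_inv_sinc)

lemma Re_kernel_deriv_1: "Re (kernel_deriv j 1 m) = Re ((deriv ^^ m) (cos_kernel j) 0)"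
proof -
  define sin_kernel where "sin_kernel s = inv_sinc s^(j+1) * sin (of_real pi * s)" for s
  have hol_sin: "sin_kernel holomorphic_on ball 0 1"
    unfolding sin_kernel_def[abs_def] by (intro holomorphic_intros holomorphic_inv_sinc)
  have real: "(deriv ^^ m) sin_kernel 0 \<in> \<real>"
    using hol_sin by (intro higher_deriv_cnj_symmetric_real) (auto simp: sin_kernel_def inv_sinc_cnj cnj_sin)
  have "exp (\<i> * of_real pi * s * of_real 1) = cos (of_real pi * s) + \<i> * sin (of_real pi * s)" for s
    using exp_Euler[of "of_real pi * s"] by (simp add: mult.assoc)
  then have "kernel_deriv j 1 m = (deriv ^^ m) (\<lambda>s. cos_kernel j s + \<i> * sin_kernel s) 0"
    unfolding kernel_deriv_def cos_kernel_def sin_kernel_def by (simp add: algebra_simps)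
  also have "\<dots> = (deriv ^^ m) (cos_kernel j) 0 + \<i> * (deriv ^^ m) sin_kernel 0"
    using holomorphic_cos_kernel hol_sin
    by (simp add: higher_deriv_add[of _ "ball 0 1"] higher_deriv_cmult[of _ "ball 0 1"] holomorphic_intros)
  finally show ?thesis
    using real by (auto elim!: Reals_cases)
qed

lemma higher_deriv_cos_kernel_odd: "odd m \<Longrightarrow> (deriv ^^ m) (cos_kernel j) 0 = 0"
  by (rule higher_deriv_even_fun_odd_order[OF holomorphic_cos_kernel])
     (auto simp: cos_kernel_def inv_sinc_minus)

lemma higher_deriv_cos_kernel_self:
  assumes "j \<ge> 1"
  shows "(deriv ^^ j) (cos_kernel j) 0 = 0"
proof -
  obtain i where j: "j = Suc i"
    using assms by (cases j) auto
  define T where "T s = inv_sinc s ^ j" for s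
  have holT: "T holomorphic_on ball 0 1"
    unfolding T_def[abs_def] by (intro holomorphic_intros holomorphic_inv_sinc)
  have cos_kernel_eq: "cos_kernel j s = T s - (1 / of_nat j) * (s * deriv T s)" if s: "s \<in> ball 0 1" for s
  proof -
    have "(inv_sinc has_field_derivative deriv inv_sinc s) (at s)"
      using s by (intro holomorphic_derivI[OF holomorphic_inv_sinc]) auto
    then have "(T has_field_derivative of_nat j * inv_sinc s ^ (j - 1) * deriv inv_sinc s) (at s)"
      unfolding T_def[abs_def] by (auto intro!: derivative_eq_intros)
    then have "T s - (1 / of_nat j) * (s * deriv T s) = inv_sinc s ^ i * (inv_sinc s - s * deriv inv_sinc s)"
      by (simp add: DERIV_imp_deriv T_def j field_simps del: of_nat_Suc)
    also have "\<dots> = cos_kernel j s"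
      by (simp add: inv_sinc_sq_cos[OF s, symmetric] cos_kernel_def j power2_eq_square mult_ac)
    finally show ?thesis ..
  qed
  have hol_dT: "deriv T holomorphic_on ball 0 1"
    using holT by (rule holomorphic_deriv) simp
  have "(deriv ^^ j) (\<lambda>s. (1 / of_nat j) * (s * deriv T s)) 0
      = (1 / of_nat j) * (deriv ^^ j) (\<lambda>s. s * deriv T s) 0"
    by (rule higher_deriv_cmult[of _ "ball 0 1"]) (auto intro!: holomorphic_intros hol_dT)
  also have "\<dots> = (deriv ^^ j) T 0"
    using higher_deriv_times_ident_deriv[OF holT, of j] assms by simp
  finally have "(deriv ^^ j) (\<lambda>s. (1 / of_nat j) * (s * deriv T s)) 0 = (deriv ^^ j) T 0" .
  moreover have "(deriv ^^ j) (cos_kernel j) 0 = (deriv ^^ j) (\<lambda>s. T s - (1 / of_nat j) * (s * deriv T s)) 0"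
    using holomorphic_cos_kernel holT hol_dT cos_kernel_eq
    by (intro higher_deriv_transform_within_open[of _ "ball 0 1"] holomorphic_intros) auto
  moreover have "\<dots> = (deriv ^^ j) T 0 - (deriv ^^ j) (\<lambda>s. (1 / of_nat j) * (s * deriv T s)) 0"
    by (rule higher_deriv_diff[of _ "ball 0 1"]) (auto intro!: holomorphic_intros holT hol_dT)
  ultimately show ?thesis
    by simp
qed

section \<open>Triangular systems\<close>

lemma sum_odd_terms:
  fixes f :: "nat \<Rightarrow> 'a::comm_monoid_add"
  shows "(\<And>i. even i \<Longrightarrow> i \<le> 2*m+1 \<Longrightarrow> f i = 0) \<Longrightarrow> (\<Sum>i=0..2*m+1. f i) = (\<Sum>i=0..m. f (2*i+1))"
proof (induction m)
  case 0
  then show ?case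
    using "0.prems"[of 0] by (simp add: sum.atLeast0_atMost_Suc)
next
  case (Suc m)
  have "2 * Suc m + 1 = Suc (Suc (2*m+1))"
    by simp
  then show ?case
    using Suc.IH Suc.prems Suc.prems[of "2*m+2"] by (simp add: sum.atLeast0_atMost_Suc)
qed

lemma sum_even_terms:
  fixes f :: "nat \<Rightarrow> 'a::comm_monoid_add"
  assumes "f 0 = 0"
  shows "(\<And>i. odd i \<Longrightarrow> i \<le> 2*m \<Longrightarrow> f i = 0) \<Longrightarrow> (\<Sum>i=0..2*m. f i) = (\<Sum>i=1..m. f (2*i))"
proof (induction m)
  case 0
  then show ?case
    using assms by simp
next
  case (Suc m)
  have "2 * Suc m = Suc (Suc (2*m))"
    by simp
  then show ?case
    using Suc.IH Suc.prems Suc.prems[of "2*m+1"] by (simp add: sum.atLeast0_atMost_Suc sum.cl_ivl_Suc)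
qed

lemma triangular_system_inverse:
  fixes X Y :: "nat \<Rightarrow> 'b \<Rightarrow> 'a::real_vector" and A :: "nat \<Rightarrow> nat \<Rightarrow> real"
  assumes XY: "\<And>j n. lo \<le> j \<Longrightarrow> j \<le> M \<Longrightarrow> X j n = (\<Sum>i=lo..j. A j i *\<^sub>R Y i n)"
    and diag: "\<And>j. lo \<le> j \<Longrightarrow> j \<le> M \<Longrightarrow> A j j \<noteq> 0"
  shows "lo \<le> m \<Longrightarrow> m \<le> M \<Longrightarrow>
    \<exists>c. c m \<noteq> 0 \<and> (\<forall>j>m. c j = 0) \<and> (\<forall>n. Y m n = (\<Sum>j=lo..M. c j *\<^sub>R X j n))"
proof (induction m rule: less_induct)
  case (less m)
  have "\<forall>i\<in>{lo..<m}. \<exists>c. (\<forall>j>i. c j = 0) \<and> (\<forall>n. Y i n = (\<Sum>j=lo..M. c j *\<^sub>R X j n))"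
    using less by (metis atLeastLessThan_iff order.strict_trans2 less_imp_le)
  then obtain C where C: "\<And>i. i \<in> {lo..<m} \<Longrightarrow>
      (\<forall>j>i. C i j = 0) \<and> (\<forall>n. Y i n = (\<Sum>j=lo..M. C i j *\<^sub>R X j n))"
    by metis
  define a where "a = A m m"
  have "a \<noteq> 0"
    using diag less.prems by (simp add: a_def)
  \<comment> \<open>row m solved for Y m, with the already inverted rows i < m substituted\<close>
  define c where "c j = inverse a * ((if j = m then 1 else 0) - (\<Sum>i=lo..<m. A m i * C i j))" for j
  have C_upper: "C i j = 0" if "i \<in> {lo..<m}" "j \<ge> m" for i j
    using C[OF that(1)] that by auto
  have "Y m n = (\<Sum>j=lo..M. c j *\<^sub>R X j n)" for n
  proof -
    have "(\<Sum>j=lo..M. c j *\<^sub>R X j n) = inverse a *\<^sub>R ((\<Sum>j=lo..M. (if j = m then 1 else 0) *\<^sub>R X j n)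
        - (\<Sum>j=lo..M. (\<Sum>i=lo..<m. A m i * C i j) *\<^sub>R X j n))"
      unfolding c_def
      by (simp only: scaleR_scaleR[symmetric] scaleR_diff_left scaleR_diff_right sum_subtractf
          scaleR_sum_right)
    also have "(\<Sum>j=lo..M. (if j = m then 1 else 0) *\<^sub>R X j n) = X m n"
      using less.prems by (simp add: if_distrib[of "\<lambda>x. x *\<^sub>R _"] cong: if_cong)
    also have "\<dots> = a *\<^sub>R Y m n + (\<Sum>i=lo..<m. A m i *\<^sub>R Y i n)"
      using XY[of m n] less.prems by (simp add: a_def atLeastLessThanSuc_atLeastAtMost[symmetric])
    also have "(\<Sum>j=lo..M. (\<Sum>i=lo..<m. A m i * C i j) *\<^sub>R X j n) = (\<Sum>i=lo..<m. A m i *\<^sub>R Y i n)"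
      using C by (simp add: scaleR_sum_left scaleR_sum_right sum.swap[of _ "{lo..M}"])
    finally show ?thesis
      using \<open>a \<noteq> 0\<close> by simp
  qed
  moreover have "c m \<noteq> 0" "\<forall>j>m. c j = 0"
    using \<open>a \<noteq> 0\<close> C_upper by (auto simp: c_def)
  ultimately show ?case
    by blast
qed

lemma Fnmu_odd_eq_sum_Itilde:
  assumes "\<mu> = 2*M+1"
  shows "\<exists>c :: nat \<Rightarrow> real. c \<mu> \<noteq> 0 \<and> (\<forall>n. complex_of_real (Fnmu a n \<mu>) =
           (\<Sum>j=0..\<mu> div 2. complex_of_real (c (2*j+1)) * Itilde a n (2*j+1) 0))"
proof -
  define A where "A j i = Re (kernel_deriv (2*j+1) 0 (2*j-2*i)) / (fact (2*i+1) * fact (2*j-2*i))" for j i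
  have "Itilde a n (2*j+1) 0 = (\<Sum>i=0..j. A j i *\<^sub>R complex_of_real (Fnmu a n (2*i+1)))" for j n
  proof -
    have "Itilde a n (2*j+1) 0 = (\<Sum>i=0..2*j+1. of_real (Fnmu a n i) * kernel_deriv (2*j+1) 0 (2*j+1-i)
                                     / (fact i * fact (2*j+1-i)))"
      by (rule Itilde_eq_sum_Fnmu) simp
    also have "\<dots> = (\<Sum>i=0..j. of_real (Fnmu a n (2*i+1)) * kernel_deriv (2*j+1) 0 (2*j-2*i)
                                     / (fact (2*i+1) * fact (2*j-2*i)))"
      by (subst sum_odd_terms) (auto simp: kernel_deriv_0_odd)
    also have "\<dots> = (\<Sum>i=0..j. A j i *\<^sub>R complex_of_real (Fnmu a n (2*i+1)))"
      using kernel_deriv_0_real by (intro sum.cong refl) (simp add: A_def scaleR_conv_of_real)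
    finally show ?thesis .
  qed
  moreover have "A j j \<noteq> 0" for j
    by (simp add: A_def)
  ultimately obtain c where "c M \<noteq> 0"
      "\<forall>n. complex_of_real (Fnmu a n (2*M+1)) = (\<Sum>j=0..M. c j *\<^sub>R Itilde a n (2*j+1) 0)"
    using triangular_system_inverse[of 0 M "\<lambda>j n. Itilde a n (2*j+1) 0" A
        "\<lambda>i n. complex_of_real (Fnmu a n (2*i+1))" M] by auto
  then show ?thesis
    using assms by (intro exI[of _ "\<lambda>i. c (i div 2)"]) (simp add: scaleR_conv_of_real)
qed

lemma Fnmu_even_eq_sum_Re_Itilde:
  assumes "\<mu> = 2*M" "M \<ge> 1"
  shows "\<exists>c :: nat \<Rightarrow> real. c \<mu> \<noteq> 0 \<and> (\<forall>n. Fnmu a n \<mu> =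
           (\<Sum>j=1..\<mu> div 2. c (2*j) * Re (Itilde a n (2*j) 1)))"
proof -
  define A where "A j i = Re (kernel_deriv (2*j) 1 (2*j-2*i)) / (fact (2*i) * fact (2*j-2*i))" for j i
  have Re_term: "Re (of_real x * z / (fact i * fact k)) = x * Re z / (fact i * fact k)" for x z i k
  proof -
    have "(fact i * fact k :: complex) = of_real (fact i * fact k)"
      by simp
    then show ?thesis
      by (simp only: Re_divide_of_real) simp
  qed
  have "Re (Itilde a n (2*j) 1) = (\<Sum>i=1..j. A j i *\<^sub>R Fnmu a n (2*i))" if "1 \<le> j" for j n
  proof -
    have "Re (Itilde a n (2*j) 1) = (\<Sum>i=0..2*j. Fnmu a n i * Re (kernel_deriv (2*j) 1 (2*j-i))
                                        / (fact i * fact (2*j-i)))"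
      by (subst Itilde_eq_sum_Fnmu) (simp_all add: Re_sum Re_term)
    also have "\<dots> = (\<Sum>i=1..j. Fnmu a n (2*i) * Re (kernel_deriv (2*j) 1 (2*j-2*i))
                                        / (fact (2*i) * fact (2*j-2*i)))"
      using higher_deriv_cos_kernel_self[of "2*j"] that
      by (subst sum_even_terms) (auto simp: Re_kernel_deriv_1 higher_deriv_cos_kernel_odd)
    also have "\<dots> = (\<Sum>i=1..j. A j i *\<^sub>R Fnmu a n (2*i))"
      by (simp add: A_def mult.commute)
    finally show ?thesis .
  qed
  moreover have "A j j \<noteq> 0" for j
    by (simp add: A_def)
  ultimately obtain c where "c M \<noteq> 0"
      "\<forall>n. Fnmu a n (2*M) = (\<Sum>j=1..M. c j *\<^sub>R Re (Itilde a n (2*j) 1))"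
    using triangular_system_inverse[of 1 M "\<lambda>j n. Re (Itilde a n (2*j) 1)" A
        "\<lambda>i n. Fnmu a n (2*i)" M] assms(2) by auto
  then show ?thesis
    using assms by (intro exI[of _ "\<lambda>i. c (i div 2)"]) simp
qed

theorem lemma4:
  fixes a \<mu> :: nat
  assumes "a \<ge> 2" and "\<mu> \<le> a - 1"
  shows "\<exists>c :: nat \<Rightarrow> real. c \<mu> \<noteq> 0 \<and>
    (\<forall>n::nat.
       (\<mu> = 0 \<longrightarrow> complex_of_real (Fnmu a n \<mu>) = Itilde a n 0 1) \<and>
       (odd \<mu> \<longrightarrow> complex_of_real (Fnmu a n \<mu>) =
           (\<Sum>j=0..\<mu> div 2. complex_of_real (c (2*j+1)) * Itilde a n (2*j+1) 0)) \<and>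
       (even \<mu> \<and> \<mu> \<ge> 2 \<longrightarrow> Fnmu a n \<mu> =
           (\<Sum>j=1..\<mu> div 2. c (2*j) * Re (Itilde a n (2*j) 1))))"
proof -
  consider "\<mu> = 0" | M where "\<mu> = 2*M+1" | M where "\<mu> = 2*M" "M \<ge> 1"
    by (metis oddE evenE less_one not_le mult_0_right)
  then show ?thesis
  proof cases
    case 1
    have "Itilde a n 0 1 = complex_of_real (Fnmu a n 0)" for n
      by (subst Itilde_eq_sum_Fnmu) simp_all
    then show ?thesis
      using 1 by (intro exI[of _ "\<lambda>_. 1"]) auto
  next
    case (2 M)
    then show ?thesis
      using Fnmu_odd_eq_sum_Itilde[of \<mu> M a] by auto
  next
    case (3 M)
    then show ?thesis
      using Fnmu_even_eq_sum_Re_Itilde[of \<mu> M a] by auto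
  qed
qed

end
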